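(* Assume $\|\hat F'(y)-\hat F'(x)\|_F\le L_{\hat F}\|y-x\|$ for all $x,y\in\mathcal F$. Let $x\in\mathcal F$, $\tau>0$, $L\ge L_{\hat F}$, and suppose $T_{L,\tau}(x)\in\mathcal F$. Then for every $r>0$, $$\frac\tau2+\frac{\hat f_2(x)}{2\tau}-\hat f_1(T_{L,\tau}(x))\ge Lr^2\varkappa\Big(\frac{\Delta_r(x)}{2\tau Lr^2}\Big),$$ where $\Delta_r(x)=\hat f_2(x)-\min_{y}\{\|\hat F(x)+\hat F'(x)(y-x)\|^2:\|y-x\|\le r\}$ and $\varkappa(t)=\frac{t^2}2$ for $t\in[0,1]$, $\varkappa(t)=t-\frac12$ for $t>1$.
   Context: Let $F:\mathbb R^n\to\mathbb R^m$ be smooth, $\hat F=\frac1{\sqrt m}F$ with Jacobian $\hat F'(x)$; Euclidean norms, $\|\cdot\|_F$ Frobenius norm; $\mathcal F\subseteq\mathbb R^n$ closed convex with nonempty interior. $\hat f_1(x)=\|\hat F(x)\|$, $\hat f_2=\hat f_1^2$, $\psi_{x,L,\tau}(y)=\frac\tau2+\frac1{2\tau}\|\hat F(x)+\hat F'(x)(y-x)\|^2+\frac L2\|y-x\|^2$, and $T_{L,\tau}(x)=\arg\min_{y\in\mathbb R^n}\psi_{x,L,\tau}(y)$. *)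

theory Defs
  imports "HOL-Analysis.Analysis"
begin

definition frob_norm :: "real^'n^'m \<Rightarrow> real" where
  "frob_norm A = sqrt (\<Sum>i\<in>UNIV. \<Sum>j\<in>UNIV. (A $ i $ j)\<^sup>2)"

definition Fhat :: "(real^'n \<Rightarrow> real^'m) \<Rightarrow> real^'n \<Rightarrow> real^'m" where
  "Fhat F x = (1 / sqrt (real CARD('m))) *\<^sub>R F x"

definition Jhat :: "(real^'n \<Rightarrow> real^'n^'m) \<Rightarrow> real^'n \<Rightarrow> real^'n^'m" where
  "Jhat J x = (1 / sqrt (real CARD('m))) *\<^sub>R J x"

definition f1hat :: "(real^'n \<Rightarrow> real^'m) \<Rightarrow> real^'n \<Rightarrow> real" where
  "f1hat F x = norm (Fhat F x)"

definition f2hat :: "(real^'n \<Rightarrow> real^'m) \<Rightarrow> real^'n \<Rightarrow> real" where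
  "f2hat F x = (f1hat F x)\<^sup>2"

definition psi :: "(real^'n \<Rightarrow> real^'m) \<Rightarrow> (real^'n \<Rightarrow> real^'n^'m) \<Rightarrow>
    real^'n \<Rightarrow> real \<Rightarrow> real \<Rightarrow> real^'n \<Rightarrow> real" where
  "psi F J x L \<tau> y = \<tau> / 2 + (1 / (2 * \<tau>)) * (norm (Fhat F x + Jhat J x *v (y - x)))\<^sup>2
      + L / 2 * (norm (y - x))\<^sup>2"

definition Tmap :: "(real^'n \<Rightarrow> real^'m) \<Rightarrow> (real^'n \<Rightarrow> real^'n^'m) \<Rightarrow>
    real \<Rightarrow> real \<Rightarrow> real^'n \<Rightarrow> real^'n" where
  "Tmap F J L \<tau> x = (THE y. \<forall>z. psi F J x L \<tau> y \<le> psi F J x L \<tau> z)"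

definition Delta :: "(real^'n \<Rightarrow> real^'m) \<Rightarrow> (real^'n \<Rightarrow> real^'n^'m) \<Rightarrow>
    real \<Rightarrow> real^'n \<Rightarrow> real" where
  "Delta F J r x = f2hat F x
     - Inf ((\<lambda>y. (norm (Fhat F x + Jhat J x *v (y - x)))\<^sup>2) ` cball x r)"

definition kappa :: "real \<Rightarrow> real" where
  "kappa t = (if t \<le> 1 then t\<^sup>2 / 2 else t - 1 / 2)"

end

theory Submission
  imports Defs
begin

(* The model psi majorises f1hat: as the Jacobian of Fhat is LF-Lipschitz on the convex set,
   the linearisation error of Fhat is at most LF/2 |y - x|^2, and a \<le> \<tau>/2 + a^2/(2\<tau>).
   Hence f1hat (T x) \<le> psi (T x) \<le> psi y for every y, i.e.
     \<tau>/2 + f2hat x/(2\<tau>) - f1hat (T x) \<ge> (f2hat x - |Fhat x + Jhat x (y - x)|^2)/(2\<tau>) - L/2 |y - x|^2.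
   Take y = x + t (y' - x) with y' a minimiser of the linearised residual over the r-ball.
   Convexity of the squared residual bounds the right-hand side below by
   t \<Delta>_r(x)/(2\<tau>) - L r^2 t^2/2, and maximising over t \<in> [0,1] produces kappa. *)

lemma frob_norm_eq_norm: "frob_norm A = norm A"
  by (simp add: frob_norm_def norm_vec_def L2_set_def sum_nonneg)

lemma power2_norm_vec: "(norm (v :: 'a::real_normed_vector^'k))\<^sup>2 = (\<Sum>i\<in>UNIV. (norm (v $ i))\<^sup>2)"
  by (simp add: norm_vec_def L2_set_def sum_nonneg)

lemma norm_matrix_vector_mult_le: "norm ((A::real^'n^'m) *v v) \<le> norm A * norm v"
proof -
  have "(norm (A *v v))\<^sup>2 = (\<Sum>i\<in>UNIV. (inner (A $ i) v)\<^sup>2)"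
    by (simp add: power2_norm_vec matrix_vector_mult_def inner_vec_def)
  also have "\<dots> \<le> (\<Sum>i\<in>UNIV. (norm (A $ i) * norm v)\<^sup>2)"
    by (intro sum_mono) (simp add: abs_le_square_iff[symmetric] abs_mult Cauchy_Schwarz_ineq2)
  also have "\<dots> = (norm A * norm v)\<^sup>2"
    by (simp add: power2_norm_vec[of A] power_mult_distrib sum_distrib_right)
  finally show ?thesis
    by (rule power2_le_imp_le) simp
qed

lemma scaleR_matrix_vector_mult: "((c::real) *\<^sub>R (A::real^'n^'m)) *v v = c *\<^sub>R (A *v v)"
  by (simp add: vec_eq_iff matrix_vector_mult_def sum_distrib_left mult.assoc)

lemma power2_norm_convex_combination:
  fixes u v :: "'a::real_inner"
  shows "(norm ((1 - t) *\<^sub>R u + t *\<^sub>R v))\<^sup>2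
    = (1 - t) * (norm u)\<^sup>2 + t * (norm v)\<^sup>2 - t * (1 - t) * (norm (u - v))\<^sup>2"
  unfolding power2_norm_eq_inner
  by (simp add: inner_add_left inner_add_right inner_diff_left inner_diff_right inner_commute
      algebra_simps)

lemma convex_combination_add_left:
  fixes a b c :: "'a::real_vector"
  shows "(1 - t) *\<^sub>R (a + b) + t *\<^sub>R (a + c) = a + ((1 - t) *\<^sub>R b + t *\<^sub>R c)"
  by (simp add: algebra_simps)

lemma norm_taylor_remainder_le:
  fixes f :: "'a::real_normed_vector \<Rightarrow> 'b::real_normed_vector"
  assumes "convex S" and "x \<in> S" and "y \<in> S"
    and deriv: "\<And>z. z \<in> S \<Longrightarrow> (f has_derivative f' z) (at z)"
    and lip: "\<And>u v h. u \<in> S \<Longrightarrow> v \<in> S \<Longrightarrow> norm (f' v h - f' u h) \<le> K * norm (v - u) * norm h"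
  shows "norm (f y - f x - f' x (y - x)) \<le> K / 2 * (norm (y - x))\<^sup>2"
proof -
  define h where "h = y - x"
  define g where "g t = f (x + t *\<^sub>R h) - t *\<^sub>R f' x h" for t :: real
  define g' where "g' t = f' (x + t *\<^sub>R h) h - f' x h" for t :: real
  have segment: "x + t *\<^sub>R h \<in> S" if "t \<in> {0..1}" for t
    using convexD_alt[OF \<open>convex S\<close> \<open>x \<in> S\<close> \<open>y \<in> S\<close>, of t] that
    by (simp add: h_def algebra_simps)
  have g_deriv: "(g has_vector_derivative g' t) (at t)" if "t \<in> {0..1}" for t
  proof -
    have "((\<lambda>t. x + t *\<^sub>R h) has_derivative (\<lambda>s. s *\<^sub>R h)) (at t)"
      by (auto intro!: derivative_eq_intros)
    from has_derivative_compose[OF this deriv[OF segment[OF that]]]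
    have "((\<lambda>t. f (x + t *\<^sub>R h)) has_vector_derivative f' (x + t *\<^sub>R h) h) (at t)"
      using deriv[OF segment[OF that]]
      by (simp add: has_vector_derivative_def has_derivative_bounded_linear linear_simps)
    then show ?thesis
      unfolding g_def g'_def by (auto intro!: derivative_eq_intros)
  qed
  have "norm (g 1 - g 0) \<le> K / 2 * 1\<^sup>2 * (norm h)\<^sup>2 - K / 2 * 0\<^sup>2 * (norm h)\<^sup>2"
  proof (rule differentiable_bound_general[where \<phi> = "\<lambda>t. K / 2 * t\<^sup>2 * (norm h)\<^sup>2"
        and \<phi>' = "\<lambda>t. K * t * (norm h)\<^sup>2"])
    show "continuous_on {0..1} g"
      using g_deriv has_vector_derivative_continuous
      by (blast intro: continuous_at_imp_continuous_on)
    fix t :: real assume t: "0 < t" "t < 1"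
    then show "(g has_vector_derivative g' t) (at t)"
      by (intro g_deriv) auto
    show "norm (g' t) \<le> K * t * (norm h)\<^sup>2"
      using lip[OF \<open>x \<in> S\<close> segment, of t h] t by (simp add: g'_def power2_eq_square)
  qed (auto simp flip: has_real_derivative_iff_has_vector_derivative
      intro!: derivative_eq_intros continuous_intros)
  then show ?thesis
    by (simp add: g_def h_def algebra_simps)
qed

lemma continuous_attains_inf_coercive:
  fixes f :: "'a::heine_borel \<Rightarrow> real"
  assumes "continuous_on UNIV f" and far: "\<And>z. R < dist x z \<Longrightarrow> f x \<le> f z"
  shows "\<exists>y. \<forall>z. f y \<le> f z"
proof (cases "R < 0")
  case True
  then have "R < dist x z" for z
    using zero_le_dist[of x z] by linarith
  then show ?thesis
    using far by blast
next
  case False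
  then have "cball x R \<noteq> {}"
    by simp
  then obtain y where y: "\<forall>z\<in>cball x R. f y \<le> f z"
    using continuous_attains_inf[OF compact_cball _ continuous_on_subset[OF assms(1) subset_UNIV]]
    by blast
  have "f y \<le> f z" for z
  proof (cases "z \<in> cball x R")
    case False
    then have "f x \<le> f z"
      using far by simp
    moreover have "f y \<le> f x"
      using y \<open>\<not> R < 0\<close> by simp
    ultimately show ?thesis
      by simp
  qed (use y in blast)
  then show ?thesis
    by blast
qed

lemma has_derivative_Fhat:
  assumes "(F has_derivative (\<lambda>h. J z *v h)) (at z)"
  shows "(Fhat F has_derivative (\<lambda>h. Jhat J z *v h)) (at z)"
  using has_derivative_scaleR_right[OF assms, of "1 / sqrt (real CARD('m))"]
  by (simp add: Fhat_def[abs_def] Jhat_def scaleR_matrix_vector_mult)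

lemma norm_Fhat_remainder_le:
  assumes deriv: "\<And>z. (F has_derivative (\<lambda>h. J z *v h)) (at z)"
    and "convex S"
    and lip: "\<forall>u\<in>S. \<forall>v\<in>S. frob_norm (Jhat J v - Jhat J u) \<le> LF * norm (v - u)"
    and "x \<in> S" and "y \<in> S"
  shows "norm (Fhat F y - Fhat F x - Jhat J x *v (y - x)) \<le> LF / 2 * (norm (y - x))\<^sup>2"
proof (rule norm_taylor_remainder_le[where f' = "\<lambda>z h. Jhat J z *v h",
      OF \<open>convex S\<close> \<open>x \<in> S\<close> \<open>y \<in> S\<close>])
  show "(Fhat F has_derivative (\<lambda>h. Jhat J z *v h)) (at z)" for z
    using deriv by (rule has_derivative_Fhat)
  fix u v h assume "u \<in> S" "v \<in> S"
  have "norm (Jhat J v *v h - Jhat J u *v h) \<le> norm (Jhat J v - Jhat J u) * norm h"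
    unfolding matrix_vector_mult_diff_rdistrib[symmetric] by (rule norm_matrix_vector_mult_le)
  also have "\<dots> \<le> LF * norm (v - u) * norm h"
    using lip \<open>u \<in> S\<close> \<open>v \<in> S\<close> by (simp add: frob_norm_eq_norm mult_right_mono)
  finally show "norm (Jhat J v *v h - Jhat J u *v h) \<le> LF * norm (v - u) * norm h" .
qed

lemma psi_strongly_convex:
  assumes "\<tau> > 0" and "0 \<le> t" and "t \<le> 1"
  shows "psi F J x L \<tau> ((1 - t) *\<^sub>R y1 + t *\<^sub>R y2)
    \<le> (1 - t) * psi F J x L \<tau> y1 + t * psi F J x L \<tau> y2 - L / 2 * t * (1 - t) * (norm (y1 - y2))\<^sup>2"
proof -
  define a where "a y = Fhat F x + Jhat J x *v (y - x)" for y
  define m where "m = (1 - t) *\<^sub>R y1 + t *\<^sub>R y2"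
  have m_x: "m - x = (1 - t) *\<^sub>R (y1 - x) + t *\<^sub>R (y2 - x)"
    by (simp add: m_def algebra_simps)
  have a_m: "a m = (1 - t) *\<^sub>R a y1 + t *\<^sub>R a y2"
    unfolding a_def m_x convex_combination_add_left
    by (simp add: matrix_vector_right_distrib matrix_vector_mult_scaleR)
  have "(norm (a m))\<^sup>2 = (1 - t) * (norm (a y1))\<^sup>2 + t * (norm (a y2))\<^sup>2
      - t * (1 - t) * (norm (a y1 - a y2))\<^sup>2"
    unfolding a_m by (rule power2_norm_convex_combination)
  moreover have "(norm (m - x))\<^sup>2 = (1 - t) * (norm (y1 - x))\<^sup>2 + t * (norm (y2 - x))\<^sup>2
      - t * (1 - t) * (norm (y1 - y2))\<^sup>2"
    unfolding m_x power2_norm_convex_combination by simp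
  moreover have "\<tau> / 2 + c * ((1 - t) * A + t * B - t * (1 - t) * C)
        + L / 2 * ((1 - t) * D + t * E - t * (1 - t) * G)
      = (1 - t) * (\<tau> / 2 + c * A + L / 2 * D) + t * (\<tau> / 2 + c * B + L / 2 * E)
        - t * (1 - t) * c * C - L / 2 * t * (1 - t) * G" for c A B C D E G :: real
    by (simp add: field_simps)
  ultimately have "psi F J x L \<tau> m = (1 - t) * psi F J x L \<tau> y1 + t * psi F J x L \<tau> y2
      - t * (1 - t) * (1 / (2 * \<tau>)) * (norm (a y1 - a y2))\<^sup>2
      - L / 2 * t * (1 - t) * (norm (y1 - y2))\<^sup>2"
    unfolding psi_def a_def by (simp only:)
  moreover have "0 \<le> t * (1 - t) * (1 / (2 * \<tau>)) * (norm (a y1 - a y2))\<^sup>2"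
    using assms by simp
  ultimately show ?thesis
    unfolding m_def by linarith
qed

lemma continuous_on_psi: "continuous_on UNIV (psi F J x L \<tau>)"
  unfolding psi_def
  by (intro continuous_intros bounded_linear.continuous_on[OF matrix_vector_mul_bounded_linear])

(* Tmap is a definite description, so it needs the minimiser of psi to be unique. *)
lemma psi_unique_minimiser:
  assumes "L > 0" and "\<tau> > 0"
  shows "\<exists>!y. \<forall>z. psi F J x L \<tau> y \<le> psi F J x L \<tau> z"
proof (rule ex_ex1I)
  let ?P = "psi F J x L \<tau>"
  define R where "R = sqrt (2 * ?P x / L)"
  have P_x: "?P x = L / 2 * R\<^sup>2" and "0 \<le> R"
    using assms by (simp_all add: R_def psi_def)
  have P_z: "L / 2 * (norm (z - x))\<^sup>2 \<le> ?P z" for z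
    using assms by (simp add: psi_def)
  have "?P x \<le> ?P z" if "R < dist x z" for z
  proof -
    have "L / 2 * R\<^sup>2 \<le> L / 2 * (norm (z - x))\<^sup>2"
      using that assms \<open>0 \<le> R\<close> by (simp add: power_mono dist_norm norm_minus_commute)
    with P_x P_z[of z] show ?thesis
      by linarith
  qed
  then show "\<exists>y. \<forall>z. ?P y \<le> ?P z"
    by (rule continuous_attains_inf_coercive[OF continuous_on_psi])
next
  fix y1 y2
  assume y1: "\<forall>z. psi F J x L \<tau> y1 \<le> psi F J x L \<tau> z"
    and y2: "\<forall>z. psi F J x L \<tau> y2 \<le> psi F J x L \<tau> z"
  define m where "m = (1 - 1 / 2) *\<^sub>R y1 + (1 / 2) *\<^sub>R y2"
  have "psi F J x L \<tau> m \<le> (1 - 1 / 2) * psi F J x L \<tau> y1 + 1 / 2 * psi F J x L \<tau> y2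
      - L / 2 * (1 / 2) * (1 - 1 / 2) * (norm (y1 - y2))\<^sup>2"
    unfolding m_def using \<open>\<tau> > 0\<close> by (intro psi_strongly_convex) auto
  moreover have "psi F J x L \<tau> y2 \<le> psi F J x L \<tau> y1" "psi F J x L \<tau> y1 \<le> psi F J x L \<tau> m"
    using y1 y2 by blast+
  ultimately have "L / 2 * (1 / 2) * (1 - 1 / 2) * (norm (y1 - y2))\<^sup>2 \<le> 0"
    by (simp add: field_simps)
  with \<open>L > 0\<close> show "y1 = y2"
    by (simp add: mult_le_0_iff)
qed

lemma psi_Tmap_le:
  assumes "L > 0" and "\<tau> > 0"
  shows "psi F J x L \<tau> (Tmap F J L \<tau> x) \<le> psi F J x L \<tau> z"
  using theI'[OF psi_unique_minimiser[OF assms, of F J x]] unfolding Tmap_def by blast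

lemma f1hat_le_psi:
  assumes "\<And>z. (F has_derivative (\<lambda>h. J z *v h)) (at z)"
    and "convex S"
    and "\<forall>u\<in>S. \<forall>v\<in>S. frob_norm (Jhat J v - Jhat J u) \<le> LF * norm (v - u)"
    and "x \<in> S" and "y \<in> S" and "LF \<le> L" and "\<tau> > 0"
  shows "f1hat F y \<le> psi F J x L \<tau> y"
proof -
  define a where "a = Fhat F x + Jhat J x *v (y - x)"
  have "f1hat F y \<le> norm a + norm (Fhat F y - Fhat F x - Jhat J x *v (y - x))"
    using norm_triangle_ineq[of a "Fhat F y - Fhat F x - Jhat J x *v (y - x)"]
    by (simp add: f1hat_def a_def)
  also have "\<dots> \<le> norm a + LF / 2 * (norm (y - x))\<^sup>2"
    using norm_Fhat_remainder_le[OF assms(1-5)] by simp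
  also have "\<dots> \<le> norm a + L / 2 * (norm (y - x))\<^sup>2"
    using \<open>LF \<le> L\<close> by (simp add: mult_right_mono)
  also have "norm a \<le> \<tau> / 2 + (norm a)\<^sup>2 / (2 * \<tau>)"
  proof -
    have "2 * \<tau> * norm a \<le> \<tau>\<^sup>2 + (norm a)\<^sup>2"
      using sum_squares_bound[of \<tau> "norm a"] by (simp add: power2_eq_square algebra_simps)
    with \<open>\<tau> > 0\<close> show ?thesis
      by (simp add: field_simps power2_eq_square)
  qed
  finally show ?thesis
    by (simp add: psi_def a_def)
qed

lemma f1hat_Tmap_bound:
  assumes "\<And>z. (F has_derivative (\<lambda>h. J z *v h)) (at z)"
    and "convex S"
    and "\<forall>u\<in>S. \<forall>v\<in>S. frob_norm (Jhat J v - Jhat J u) \<le> LF * norm (v - u)"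
    and "x \<in> S" and "Tmap F J L \<tau> x \<in> S" and "LF \<le> L" and "L > 0" and "\<tau> > 0"
  shows "(f2hat F x - (norm (Fhat F x + Jhat J x *v (y - x)))\<^sup>2) / (2 * \<tau>) - L / 2 * (norm (y - x))\<^sup>2
    \<le> \<tau> / 2 + f2hat F x / (2 * \<tau>) - f1hat F (Tmap F J L \<tau> x)"
proof -
  have "f1hat F (Tmap F J L \<tau> x) \<le> psi F J x L \<tau> (Tmap F J L \<tau> x)"
    using f1hat_le_psi[OF assms(1-5)] \<open>LF \<le> L\<close> \<open>\<tau> > 0\<close> .
  also have "\<dots> \<le> psi F J x L \<tau> y"
    using \<open>L > 0\<close> \<open>\<tau> > 0\<close> by (rule psi_Tmap_le)
  finally show ?thesis
    by (simp add: psi_def diff_divide_distrib)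
qed

lemma norm_linearisation_segment_le:
  assumes "0 \<le> t" and "t \<le> 1"
  shows "(norm (Fhat F x + Jhat J x *v (x + t *\<^sub>R (y - x) - x)))\<^sup>2
    \<le> (1 - t) * f2hat F x + t * (norm (Fhat F x + Jhat J x *v (y - x)))\<^sup>2"
proof -
  have "Fhat F x + Jhat J x *v (x + t *\<^sub>R (y - x) - x)
      = (1 - t) *\<^sub>R Fhat F x + t *\<^sub>R (Fhat F x + Jhat J x *v (y - x))"
    by (simp add: matrix_vector_mult_scaleR algebra_simps)
  moreover have "0 \<le> t * (1 - t) * (norm (Fhat F x - (Fhat F x + Jhat J x *v (y - x))))\<^sup>2"
    using assms by simp
  ultimately show ?thesis
    unfolding f2hat_def f1hat_def by (simp only: power2_norm_convex_combination)
qed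

lemma f1hat_Tmap_bound_segment:
  assumes "\<And>z. (F has_derivative (\<lambda>h. J z *v h)) (at z)"
    and "convex S"
    and "\<forall>u\<in>S. \<forall>v\<in>S. frob_norm (Jhat J v - Jhat J u) \<le> LF * norm (v - u)"
    and "x \<in> S" and "Tmap F J L \<tau> x \<in> S" and "LF \<le> L" and "L > 0" and "\<tau> > 0"
    and "dist x y \<le> r" and "0 \<le> t" and "t \<le> 1"
  shows "t * ((f2hat F x - (norm (Fhat F x + Jhat J x *v (y - x)))\<^sup>2) / (2 * \<tau>)) - L * r\<^sup>2 / 2 * t\<^sup>2
    \<le> \<tau> / 2 + f2hat F x / (2 * \<tau>) - f1hat F (Tmap F J L \<tau> x)"
proof -
  let ?y = "x + t *\<^sub>R (y - x)"
  have "t * (f2hat F x - (norm (Fhat F x + Jhat J x *v (y - x)))\<^sup>2)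
      \<le> f2hat F x - (norm (Fhat F x + Jhat J x *v (?y - x)))\<^sup>2"
    using norm_linearisation_segment_le[OF \<open>0 \<le> t\<close> \<open>t \<le> 1\<close>] by (simp add: algebra_simps)
  then have "t * ((f2hat F x - (norm (Fhat F x + Jhat J x *v (y - x)))\<^sup>2) / (2 * \<tau>))
      \<le> (f2hat F x - (norm (Fhat F x + Jhat J x *v (?y - x)))\<^sup>2) / (2 * \<tau>)"
    using \<open>\<tau> > 0\<close> by (simp add: divide_right_mono)
  moreover have "(norm (?y - x))\<^sup>2 \<le> t\<^sup>2 * r\<^sup>2"
    using assms(9-11)
    by (simp add: power_mult_distrib dist_norm norm_minus_commute mult_left_mono power_mono)
  then have "L / 2 * (norm (?y - x))\<^sup>2 \<le> L * r\<^sup>2 / 2 * t\<^sup>2"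
    using \<open>L > 0\<close> by (simp add: mult_left_mono mult.commute)
  ultimately show ?thesis
    using f1hat_Tmap_bound[OF assms(1-8), of ?y] by linarith
qed

lemma Delta_attained:
  assumes "r \<ge> 0"
  obtains y where "y \<in> cball x r"
    and "Delta F J r x = f2hat F x - (norm (Fhat F x + Jhat J x *v (y - x)))\<^sup>2"
    and "(norm (Fhat F x + Jhat J x *v (y - x)))\<^sup>2 \<le> f2hat F x"
proof -
  define g where "g y = (norm (Fhat F x + Jhat J x *v (y - x)))\<^sup>2" for y
  have "continuous_on (cball x r) g"
    unfolding g_def
    by (intro continuous_intros bounded_linear.continuous_on[OF matrix_vector_mul_bounded_linear])
  moreover have "cball x r \<noteq> {}"
    using assms by simp
  ultimately obtain y where y: "y \<in> cball x r" "\<forall>z\<in>cball x r. g y \<le> g z"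
    using continuous_attains_inf[OF compact_cball] by blast
  have "Inf (g ` cball x r) = g y"
    by (rule cInf_eq_minimum) (use y in auto)
  then have "Delta F J r x = f2hat F x - g y"
    by (simp add: Delta_def g_def[abs_def])
  moreover have "g y \<le> f2hat F x"
    using y(2)[rule_format, of x] assms by (simp add: g_def f2hat_def f1hat_def)
  ultimately show ?thesis
    using that y(1) by (simp add: g_def)
qed

(* c * kappa (d / c) is the maximum of t d - c t^2 / 2 over t \<in> [0,1]. *)
lemma mult_kappa_divide_le:
  assumes "c > 0" and "d \<ge> 0"
    and bound: "\<And>t. 0 \<le> t \<Longrightarrow> t \<le> 1 \<Longrightarrow> t * d - c / 2 * t\<^sup>2 \<le> V"
  shows "c * kappa (d / c) \<le> V"
proof (cases "d \<le> c")
  case True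
  then have "c * kappa (d / c) = d / c * d - c / 2 * (d / c)\<^sup>2"
    using \<open>c > 0\<close> by (simp add: kappa_def field_simps power2_eq_square)
  also have "\<dots> \<le> V"
    using assms True by (intro bound) auto
  finally show ?thesis .
next
  case False
  then have "c * kappa (d / c) = 1 * d - c / 2 * 1\<^sup>2"
    using \<open>c > 0\<close> by (simp add: kappa_def field_simps)
  also have "\<dots> \<le> V"
    by (intro bound) auto
  finally show ?thesis .
qed

theorem lemma3:
  fixes F :: "real^'n \<Rightarrow> real^'m" and J :: "real^'n \<Rightarrow> real^'n^'m"
    and \<F> :: "(real^'n) set" and LF L \<tau> :: real and x :: "real^'n"
  assumes deriv: "\<And>z. (F has_derivative (\<lambda>h. J z *v h)) (at z)"
    and J_cont: "continuous_on UNIV J"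
    and F_closed: "closed \<F>" and F_convex: "convex \<F>" and F_int: "interior \<F> \<noteq> {}"
    and lip: "\<forall>u\<in>\<F>. \<forall>v\<in>\<F>. frob_norm (Jhat J v - Jhat J u) \<le> LF * norm (v - u)"
    and x_in: "x \<in> \<F>" and tau_pos: "\<tau> > 0" and L_ge: "L \<ge> LF" and L_pos: "L > 0"
    and T_in: "Tmap F J L \<tau> x \<in> \<F>"
  shows "\<forall>r>0. \<tau> / 2 + f2hat F x / (2 * \<tau>) - f1hat F (Tmap F J L \<tau> x)
            \<ge> L * r\<^sup>2 * kappa (Delta F J r x / (2 * \<tau> * L * r\<^sup>2))"
proof (intro allI impI)
  fix r :: real assume "r > 0"
  obtain y where y: "y \<in> cball x r"
    and Delta: "Delta F J r x = f2hat F x - (norm (Fhat F x + Jhat J x *v (y - x)))\<^sup>2"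
    and "(norm (Fhat F x + Jhat J x *v (y - x)))\<^sup>2 \<le> f2hat F x"
    using Delta_attained[OF less_imp_le[OF \<open>r > 0\<close>]] by blast
  have "L * r\<^sup>2 * kappa (Delta F J r x / (2 * \<tau>) / (L * r\<^sup>2))
      \<le> \<tau> / 2 + f2hat F x / (2 * \<tau>) - f1hat F (Tmap F J L \<tau> x)"
  proof (rule mult_kappa_divide_le)
    show "L * r\<^sup>2 > 0" and "Delta F J r x / (2 * \<tau>) \<ge> 0"
      using \<open>r > 0\<close> L_pos tau_pos Delta \<open>_ \<le> f2hat F x\<close> by auto
    fix t :: real assume "0 \<le> t" "t \<le> 1"
    with y show "t * (Delta F J r x / (2 * \<tau>)) - L * r\<^sup>2 / 2 * t\<^sup>2
        \<le> \<tau> / 2 + f2hat F x / (2 * \<tau>) - f1hat F (Tmap F J L \<tau> x)"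
      unfolding Delta
      using f1hat_Tmap_bound_segment[OF deriv F_convex lip x_in T_in L_ge L_pos tau_pos] by simp
  qed
  then show "L * r\<^sup>2 * kappa (Delta F J r x / (2 * \<tau> * L * r\<^sup>2))
      \<le> \<tau> / 2 + f2hat F x / (2 * \<tau>) - f1hat F (Tmap F J L \<tau> x)"
    by (simp add: mult.assoc)
qed

end
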